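(* Let $X$ be a presheaf of sets on $\mathscr{V}_f$ taking values in finite sets. For each $n\in\mathbb{N}$, let $X_n$ be the image of the composite $X\to\mathbb{F}[X]\to q_n\mathbb{F}[X]$, with the canonical surjection $X\twoheadrightarrow X_n$. Then $X_n$ is a finite presheaf of degree at most $n$, and $X\twoheadrightarrow X_n$ is the universal map from $X$ to a finite presheaf of degree at most $n$ (every map from $X$ to such a presheaf factors uniquely through it). These maps form a tower $\cdots\to X_{n+1}\to X_n\to X_{n-1}\to\cdots$ of maps under $X$.
   Context: $p$ prime, $\mathbb{F}=\mathbb{F}_p$, $\mathscr{V}_f$ finite-dimensional $\mathbb{F}$-vector spaces. $\mathscr{F}$ is the abelian category of functors $\mathscr{V}_f^{\mathrm{op}}\to$ ($\mathbb{F}$-vector spaces). $\mathbb{F}[X]\in\mathscr{F}$ is the sectionwise linearization of $X$, with unit $X\hookrightarrow\mathbb{F}[X]$. $q_n:\mathscr{F}\to\mathscr{F}$ is left adjoint to the inclusion of functors of Eilenberg–MacLane polynomial degree $\le n$, with universal quotient $F\twoheadrightarrow q_nF$. A presheaf $Y$ taking finite values is finite of degree at most $n$ if the composite $Y\to\mathbb{F}[Y]\to q_n\mathbb{F}[Y]$ is a monomorphism (equivalently, $Y$ embeds in a functor of $\mathscr{F}$ with a finite composition series and of polynomial degree $\le n$). *)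

theory Defs
  imports "Jordan_Normal_Form.Matrix" "HOL-Computational_Algebra.Primes"
begin

text \<open>Skeleton of V_f: object n is F^n; a morphism from F^m to F^n is a
matrix A in carrier_mat n m (acting by A *v _). Composition is matrix product.\<close>

definition presheaf :: "(nat \<Rightarrow> 'x set) \<Rightarrow> ('f::comm_ring_1 mat \<Rightarrow> 'x \<Rightarrow> 'x) \<Rightarrow> bool" where
  "presheaf X act \<longleftrightarrow>
     (\<forall>n m A x. A \<in> carrier_mat n m \<and> x \<in> X n \<longrightarrow> act A x \<in> X m) \<and>
     (\<forall>n x. x \<in> X n \<longrightarrow> act (1\<^sub>m n) x = x) \<and>
     (\<forall>n m k A B x. A \<in> carrier_mat n m \<and> B \<in> carrier_mat m k \<and> x \<in> X n
         \<longrightarrow> act (A * B) x = act B (act A x))"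

definition nat_trans ::
  "(nat \<Rightarrow> 'x set) \<Rightarrow> ('f::comm_ring_1 mat \<Rightarrow> 'x \<Rightarrow> 'x) \<Rightarrow>
   (nat \<Rightarrow> 'y set) \<Rightarrow> ('f mat \<Rightarrow> 'y \<Rightarrow> 'y) \<Rightarrow> (nat \<Rightarrow> 'x \<Rightarrow> 'y) \<Rightarrow> bool" where
  "nat_trans X actX Y actY h \<longleftrightarrow>
     (\<forall>n x. x \<in> X n \<longrightarrow> h n x \<in> Y n) \<and>
     (\<forall>n m A x. A \<in> carrier_mat n m \<and> x \<in> X n \<longrightarrow> h m (actX A x) = actY A (h n x))"

text \<open>Linearization F[X]: F[X](n) = F-valued functions supported on X n
(X n is finite), with the contravariant action given by pushforward.\<close>

definition lin :: "(nat \<Rightarrow> 'x set) \<Rightarrow> nat \<Rightarrow> ('x \<Rightarrow> 'f::field) set" where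
  "lin X n = {\<phi>. \<forall>x. x \<notin> X n \<longrightarrow> \<phi> x = 0}"

definition lin_map :: "(nat \<Rightarrow> 'x set) \<Rightarrow> ('f::field mat \<Rightarrow> 'x \<Rightarrow> 'x) \<Rightarrow> 'f mat \<Rightarrow> ('x \<Rightarrow> 'f) \<Rightarrow> ('x \<Rightarrow> 'f)" where
  "lin_map X act A \<phi> = (\<lambda>y. \<Sum>x\<in>{x \<in> X (dim_row A). act A x = y}. \<phi> x)"

definition unit_lin :: "'x \<Rightarrow> ('x \<Rightarrow> 'f::field)" where
  "unit_lin x = (\<lambda>y. if y = x then 1 else 0)"

definition lin_subfunctor :: "(nat \<Rightarrow> 'x set) \<Rightarrow> ('f::field mat \<Rightarrow> 'x \<Rightarrow> 'x) \<Rightarrow> (nat \<Rightarrow> ('x \<Rightarrow> 'f) set) \<Rightarrow> bool" where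
  "lin_subfunctor X act K \<longleftrightarrow>
     (\<forall>n. K n \<subseteq> lin X n \<and> (\<lambda>_. 0) \<in> K n \<and>
          (\<forall>a b. a \<in> K n \<longrightarrow> b \<in> K n \<longrightarrow> (\<lambda>z. a z + b z) \<in> K n) \<and>
          (\<forall>c a. a \<in> K n \<longrightarrow> (\<lambda>z. c * a z) \<in> K n)) \<and>
     (\<forall>n m A a. A \<in> carrier_mat n m \<and> a \<in> K n \<longrightarrow> lin_map X act A a \<in> K m)"

definition msum :: "nat \<Rightarrow> nat \<Rightarrow> (nat \<Rightarrow> 'f::comm_ring_1 mat) \<Rightarrow> nat set \<Rightarrow> 'f mat" where
  "msum w v fs I = mat w v (\<lambda>(i, j). \<Sum>k\<in>I. fs k $$ (i, j))"

text \<open>Eilenberg--MacLane (d+1)-st deviation of F[X] at maps fs 0, ..., fs d : F^v -> F^w,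
applied to an element of F[X](w).\<close>

definition deviation :: "(nat \<Rightarrow> 'x set) \<Rightarrow> ('f::field mat \<Rightarrow> 'x \<Rightarrow> 'x) \<Rightarrow> nat \<Rightarrow> nat \<Rightarrow> nat
     \<Rightarrow> (nat \<Rightarrow> 'f mat) \<Rightarrow> ('x \<Rightarrow> 'f) \<Rightarrow> ('x \<Rightarrow> 'f)" where
  "deviation X act d w v fs \<phi> =
     (\<lambda>z. \<Sum>I\<in>Pow {0..d}. (-1) ^ card I * lin_map X act (msum w v fs I) \<phi> z)"

definition quot_deg_le :: "(nat \<Rightarrow> 'x set) \<Rightarrow> ('f::field mat \<Rightarrow> 'x \<Rightarrow> 'x) \<Rightarrow> nat \<Rightarrow> (nat \<Rightarrow> ('x \<Rightarrow> 'f) set) \<Rightarrow> bool" where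
  "quot_deg_le X act d K \<longleftrightarrow>
     (\<forall>w v fs \<phi>. (\<forall>k\<in>{0..d}. fs k \<in> carrier_mat w v) \<and> \<phi> \<in> lin X w
        \<longrightarrow> deviation X act d w v fs \<phi> \<in> K v)"

text \<open>Kernel of the universal quotient F[X] -> q_d F[X]: the smallest subfunctor
with quotient of degree at most d.\<close>

definition qker :: "nat \<Rightarrow> (nat \<Rightarrow> 'x set) \<Rightarrow> ('f::field mat \<Rightarrow> 'x \<Rightarrow> 'x) \<Rightarrow> nat \<Rightarrow> ('x \<Rightarrow> 'f) set" where
  "qker d X act v = \<Inter> {K v | K. lin_subfunctor X act K \<and> quot_deg_le X act d K}"

text \<open>Elements of q_d F[X](v) are cosets phi + qker.\<close>

definition qcoset :: "nat \<Rightarrow> (nat \<Rightarrow> 'x set) \<Rightarrow> ('f::field mat \<Rightarrow> 'x \<Rightarrow> 'x) \<Rightarrow> nat \<Rightarrow> ('x \<Rightarrow> 'f) \<Rightarrow> ('x \<Rightarrow> 'f) set" where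
  "qcoset d X act v \<phi> = {(\<lambda>z. \<phi> z + k z) | k. k \<in> qker d X act v}"

definition proj :: "nat \<Rightarrow> (nat \<Rightarrow> 'x set) \<Rightarrow> ('f::field mat \<Rightarrow> 'x \<Rightarrow> 'x) \<Rightarrow> nat \<Rightarrow> 'x \<Rightarrow> ('x \<Rightarrow> 'f) set" where
  "proj d X act v x = qcoset d X act v (unit_lin x)"

text \<open>X_d: the image of X in q_d F[X], with action the restriction of that of q_d F[X].\<close>

definition trunc :: "nat \<Rightarrow> (nat \<Rightarrow> 'x set) \<Rightarrow> ('f::field mat \<Rightarrow> 'x \<Rightarrow> 'x) \<Rightarrow> nat \<Rightarrow> ('x \<Rightarrow> 'f) set set" where
  "trunc d X act v = proj d X act v ` X v"

definition trunc_act :: "nat \<Rightarrow> (nat \<Rightarrow> 'x set) \<Rightarrow> ('f::field mat \<Rightarrow> 'x \<Rightarrow> 'x)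
     \<Rightarrow> 'f mat \<Rightarrow> ('x \<Rightarrow> 'f) set \<Rightarrow> ('x \<Rightarrow> 'f) set" where
  "trunc_act d X act A c =
     {(\<lambda>z. lin_map X act A \<phi> z + k z) | \<phi> k. \<phi> \<in> c \<and> k \<in> qker d X act (dim_col A)}"

text \<open>Y (presheaf with finite values) is finite of degree at most d:
Y -> F[Y] -> q_d F[Y] is a monomorphism.\<close>

definition finite_deg_le :: "nat \<Rightarrow> (nat \<Rightarrow> 'y set) \<Rightarrow> ('f::field mat \<Rightarrow> 'y \<Rightarrow> 'y) \<Rightarrow> bool" where
  "finite_deg_le d Y actY \<longleftrightarrow>
     presheaf Y actY \<and> (\<forall>v. finite (Y v)) \<and>
     (\<forall>v x y. x \<in> Y v \<and> y \<in> Y v \<and>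
        (\<lambda>z. (unit_lin x :: 'y \<Rightarrow> 'f) z - unit_lin y z) \<in> qker d Y actY v \<longrightarrow> x = y)"

end

theory Submission
  imports Defs
begin

(* Pushing coefficients forward along a natural transformation f : X -> Y commutes with the
   action and with the Eilenberg--MacLane deviations, so it maps the kernel of F[X] -> q_d F[X]
   into the kernel for Y, and onto it when f is sectionwise surjective.  Hence a map from X to a
   finite presheaf of degree at most d cannot separate points that become equal in q_d F[X],
   which gives the factorisation through X_d.  For the surjection X -> X_d, a relation
   unit c - unit c' in the kernel for X_d lifts, modulo the kernel for X, to
   unit (r c) - unit (r c') for a set-theoretic section r, so c = c' and X_d has degree at
   most d.  The cross-effect recursion for deviations shows that degree at most d implies
   degree at most d+1, and the universal property of X_{d+1} yields the tower. *)

lemma presheaf_act_closed: "presheaf X act \<Longrightarrow> A \<in> carrier_mat n m \<Longrightarrow> x \<in> X n \<Longrightarrow> act A x \<in> X m"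
  unfolding presheaf_def by blast

lemma presheaf_act_one: "presheaf X act \<Longrightarrow> x \<in> X n \<Longrightarrow> act (1\<^sub>m n) x = x"
  unfolding presheaf_def by blast

lemma presheaf_act_mult:
  "presheaf X act \<Longrightarrow> A \<in> carrier_mat n m \<Longrightarrow> B \<in> carrier_mat m k \<Longrightarrow> x \<in> X n
    \<Longrightarrow> act (A * B) x = act B (act A x)"
  unfolding presheaf_def by blast

lemma nat_trans_closed: "nat_trans X act Y actY h \<Longrightarrow> x \<in> X n \<Longrightarrow> h n x \<in> Y n"
  unfolding nat_trans_def by blast

lemma nat_trans_act:
  "nat_trans X act Y actY h \<Longrightarrow> A \<in> carrier_mat n m \<Longrightarrow> x \<in> X n \<Longrightarrow> h m (act A x) = actY A (h n x)"
  unfolding nat_trans_def by blast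

lemma mem_qker_iff:
  "a \<in> qker d X act v \<longleftrightarrow> (\<forall>K. lin_subfunctor X act K \<and> quot_deg_le X act d K \<longrightarrow> a \<in> K v)"
  unfolding qker_def by blast

lemma lin_map_in_lin:
  assumes "presheaf X act" "A \<in> carrier_mat n m"
  shows "lin_map X act A \<phi> \<in> lin X m"
proof -
  have "\<And>x. x \<in> X n \<Longrightarrow> act A x \<in> X m" using presheaf_act_closed[OF assms] .
  moreover have "dim_row A = n" using assms by auto
  ultimately show ?thesis unfolding lin_def lin_map_def by (auto intro!: sum.neutral)
qed

lemma msum_carrier_mat: "msum w v fs I \<in> carrier_mat w v"
  unfolding msum_def by auto

lemma deviation_in_lin:
  assumes "presheaf X act"
  shows "deviation X act d w v fs \<phi> \<in> lin X v"
  using lin_map_in_lin[OF assms msum_carrier_mat] unfolding deviation_def lin_def by simp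

lemma lin_map_diff: "lin_map X act A (\<lambda>z. a z - b z) = (\<lambda>y. lin_map X act A a y - lin_map X act A b y)"
  unfolding lin_map_def by (simp add: sum_subtractf)

lemma lin_map_unit_lin:
  assumes "finite (X (dim_row A))" "x \<in> X (dim_row A)"
  shows "lin_map X act A (unit_lin x) = unit_lin (act A x)"
proof
  fix y
  have "lin_map X act A (unit_lin x) y = (\<Sum>x'\<in>{x' \<in> X (dim_row A). act A x' = y}. if x' = x then 1 else 0)"
    unfolding lin_map_def unit_lin_def by (simp add: eq_commute)
  also have "\<dots> = (if x \<in> {x' \<in> X (dim_row A). act A x' = y} then 1 else 0)"
    using assms(1) by (simp add: sum.delta)
  finally show "lin_map X act A (unit_lin x) y = unit_lin (act A x) y"
    using assms(2) unfolding unit_lin_def by auto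
qed

lemma sum_unit_lin_mult:
  assumes "finite T" "c \<in> T"
  shows "(\<Sum>t\<in>T. unit_lin c t * a t) = a c"
proof -
  have "(\<Sum>t\<in>T. unit_lin c t * a t) = (\<Sum>t\<in>T. if t = c then a c else 0)"
    unfolding unit_lin_def by (rule sum.cong) auto
  then show ?thesis using assms by simp
qed

lemma lin_eq_sum_unit_lin:
  assumes "finite (X v)" "\<phi> \<in> lin X v"
  shows "\<phi> z = (\<Sum>x\<in>X v. \<phi> x * unit_lin x z)"
  using assms unfolding lin_def unit_lin_def by (cases "z \<in> X v") (simp_all add: if_distrib sum.delta' cong: if_cong)

subsection \<open>Subfunctors of the linearization\<close>

lemma lin_subfunctorI:
  assumes "\<And>n. K n \<subseteq> lin X n" "\<And>n. (\<lambda>_. 0) \<in> K n"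
    "\<And>n a b. a \<in> K n \<Longrightarrow> b \<in> K n \<Longrightarrow> (\<lambda>z. a z + b z) \<in> K n"
    "\<And>n c a. a \<in> K n \<Longrightarrow> (\<lambda>z. c * a z) \<in> K n"
    "\<And>n m A a. A \<in> carrier_mat n m \<Longrightarrow> a \<in> K n \<Longrightarrow> lin_map X act A a \<in> K m"
  shows "lin_subfunctor X act K"
  unfolding lin_subfunctor_def using assms by blast

context
  fixes X :: "nat \<Rightarrow> 'x set" and act :: "'f::field mat \<Rightarrow> 'x \<Rightarrow> 'x" and K
  assumes K: "lin_subfunctor X act K"
begin

lemma lin_subfunctor_subset_lin: "a \<in> K n \<Longrightarrow> a \<in> lin X n"
  using K unfolding lin_subfunctor_def by blast

lemma lin_subfunctor_zero: "(\<lambda>z. 0) \<in> K n"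
  using K unfolding lin_subfunctor_def by blast

lemma lin_subfunctor_add: "a \<in> K n \<Longrightarrow> b \<in> K n \<Longrightarrow> (\<lambda>z. a z + b z) \<in> K n"
  using K unfolding lin_subfunctor_def by blast

lemma lin_subfunctor_scale: "a \<in> K n \<Longrightarrow> (\<lambda>z. c * a z) \<in> K n"
  using K unfolding lin_subfunctor_def by blast

lemma lin_subfunctor_lin_map: "A \<in> carrier_mat n m \<Longrightarrow> a \<in> K n \<Longrightarrow> lin_map X act A a \<in> K m"
  using K unfolding lin_subfunctor_def by blast

lemma lin_subfunctor_diff:
  assumes "a \<in> K n" "b \<in> K n"
  shows "(\<lambda>z. a z - b z) \<in> K n"
  using lin_subfunctor_add[OF assms(1) lin_subfunctor_scale[OF assms(2), of "-1"]] by simp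

lemma lin_subfunctor_sum:
  assumes "finite S" "\<forall>i\<in>S. a i \<in> K n"
  shows "(\<lambda>z. \<Sum>i\<in>S. c i * a i z) \<in> K n"
  using assms
proof (induction S rule: finite_induct)
  case empty
  then show ?case using lin_subfunctor_zero by simp
next
  case (insert i S)
  then have "(\<lambda>z. c i * a i z + (\<Sum>i\<in>S. c i * a i z)) \<in> K n"
    using lin_subfunctor_add[OF lin_subfunctor_scale] by simp
  then show ?case using insert by simp
qed

end

lemma lin_subfunctor_lin:
  assumes "presheaf X act"
  shows "lin_subfunctor X act (lin X)"
proof (rule lin_subfunctorI)
  show "lin_map X act A a \<in> lin X m" if "A \<in> carrier_mat n m" for n m A a
    using that by (rule lin_map_in_lin[OF assms])
qed (auto simp: lin_def)

lemma quot_deg_le_lin: "presheaf X act \<Longrightarrow> quot_deg_le X act d (lin X)"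
  unfolding quot_deg_le_def using deviation_in_lin by blast

lemma lin_subfunctor_qker:
  assumes "presheaf X act"
  shows "lin_subfunctor X act (qker d X act)"
proof (rule lin_subfunctorI)
  show "qker d X act n \<subseteq> lin X n" for n
    using lin_subfunctor_lin[OF assms] quot_deg_le_lin[OF assms] mem_qker_iff by blast
qed (auto simp: mem_qker_iff lin_subfunctor_zero lin_subfunctor_add lin_subfunctor_scale
    lin_subfunctor_lin_map)

lemma quot_deg_le_qker: "quot_deg_le X act d (qker d X act)"
  unfolding quot_deg_le_def mem_qker_iff by (auto simp: quot_deg_le_def)

lemma qker_minimal: "lin_subfunctor X act K \<Longrightarrow> quot_deg_le X act d K \<Longrightarrow> qker d X act v \<subseteq> K v"
  using mem_qker_iff by blast

subsection \<open>The presheaf \<open>X\<^sub>d\<close>\<close>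

lemma mem_qcoset_iff:
  assumes "presheaf X act"
  shows "\<psi> \<in> qcoset d X act v \<phi> \<longleftrightarrow> (\<lambda>z. \<psi> z - \<phi> z) \<in> qker d X act v"
proof
  assume "\<psi> \<in> qcoset d X act v \<phi>"
  then show "(\<lambda>z. \<psi> z - \<phi> z) \<in> qker d X act v" unfolding qcoset_def by auto
next
  assume "(\<lambda>z. \<psi> z - \<phi> z) \<in> qker d X act v"
  then show "\<psi> \<in> qcoset d X act v \<phi>"
    unfolding qcoset_def by (intro CollectI exI[of _ "\<lambda>z. \<psi> z - \<phi> z"]) auto
qed

lemma qcoset_eq_iff:
  assumes P: "presheaf X act"
  shows "qcoset d X act v \<phi> = qcoset d X act v \<psi> \<longleftrightarrow> (\<lambda>z. \<phi> z - \<psi> z) \<in> qker d X act v"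
proof
  assume "qcoset d X act v \<phi> = qcoset d X act v \<psi>"
  moreover have "\<phi> \<in> qcoset d X act v \<phi>"
    using lin_subfunctor_zero[OF lin_subfunctor_qker[OF P]] by (simp add: mem_qcoset_iff[OF P])
  ultimately show "(\<lambda>z. \<phi> z - \<psi> z) \<in> qker d X act v" by (simp add: mem_qcoset_iff[OF P])
next
  assume k: "(\<lambda>z. \<phi> z - \<psi> z) \<in> qker d X act v"
  note Q = lin_subfunctor_qker[OF P, of d]
  have "(\<lambda>z. \<chi> z - \<phi> z) \<in> qker d X act v \<longleftrightarrow> (\<lambda>z. \<chi> z - \<psi> z) \<in> qker d X act v" for \<chi>
  proof
    assume "(\<lambda>z. \<chi> z - \<phi> z) \<in> qker d X act v"
    from lin_subfunctor_add[OF Q this k] show "(\<lambda>z. \<chi> z - \<psi> z) \<in> qker d X act v" by simp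
  next
    assume "(\<lambda>z. \<chi> z - \<psi> z) \<in> qker d X act v"
    from lin_subfunctor_diff[OF Q this k] show "(\<lambda>z. \<chi> z - \<phi> z) \<in> qker d X act v" by simp
  qed
  then show "qcoset d X act v \<phi> = qcoset d X act v \<psi>" by (auto simp: mem_qcoset_iff[OF P])
qed

lemma proj_eq_iff:
  "presheaf X act \<Longrightarrow>
    proj d X act v a = proj d X act v b \<longleftrightarrow> (\<lambda>z. unit_lin a z - unit_lin b z) \<in> qker d X act v"
  unfolding proj_def by (rule qcoset_eq_iff)

lemma trunc_act_qcoset:
  assumes P: "presheaf X act" and A: "A \<in> carrier_mat n m"
  shows "trunc_act d X act A (qcoset d X act n \<phi>) = qcoset d X act m (lin_map X act A \<phi>)"
proof (intro equalityI subsetI)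
  note Q = lin_subfunctor_qker[OF P, of d]
  have dim: "dim_col A = m" using A by auto
  fix \<psi>
  assume "\<psi> \<in> trunc_act d X act A (qcoset d X act n \<phi>)"
  then obtain \<phi>' k where \<phi>': "\<phi>' \<in> qcoset d X act n \<phi>" and k: "k \<in> qker d X act m"
    and \<psi>: "\<psi> = (\<lambda>z. lin_map X act A \<phi>' z + k z)"
    unfolding trunc_act_def dim by blast
  have "lin_map X act A (\<lambda>z. \<phi>' z - \<phi> z) \<in> qker d X act m"
    using \<phi>' by (intro lin_subfunctor_lin_map[OF Q A]) (simp add: mem_qcoset_iff[OF P])
  from lin_subfunctor_add[OF Q this k]
  show "\<psi> \<in> qcoset d X act m (lin_map X act A \<phi>)"
    unfolding mem_qcoset_iff[OF P] \<psi> lin_map_diff by (simp add: algebra_simps)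
next
  note Q = lin_subfunctor_qker[OF P, of d]
  have dim: "dim_col A = m" using A by auto
  fix \<psi>
  assume "\<psi> \<in> qcoset d X act m (lin_map X act A \<phi>)"
  then have k: "(\<lambda>z. \<psi> z - lin_map X act A \<phi> z) \<in> qker d X act m" by (simp add: mem_qcoset_iff[OF P])
  have \<phi>: "\<phi> \<in> qcoset d X act n \<phi>"
    using lin_subfunctor_zero[OF Q] by (simp add: mem_qcoset_iff[OF P])
  show "\<psi> \<in> trunc_act d X act A (qcoset d X act n \<phi>)"
    unfolding trunc_act_def dim
    by (intro CollectI exI[of _ \<phi>] exI[of _ "\<lambda>z. \<psi> z - lin_map X act A \<phi> z"]) (simp add: k \<phi>)
qed

lemma trunc_act_proj:
  assumes "presheaf X act" "finite (X n)" "A \<in> carrier_mat n m" "x \<in> X n"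
  shows "trunc_act d X act A (proj d X act n x) = proj d X act m (act A x)"
  using assms lin_map_unit_lin[of X A x act] unfolding proj_def by (simp add: trunc_act_qcoset)

context
  fixes X :: "nat \<Rightarrow> 'x set" and act :: "'f::field mat \<Rightarrow> 'x \<Rightarrow> 'x"
  assumes P: "presheaf X act" and F: "\<forall>v. finite (X v)"
begin

lemma nat_trans_proj: "nat_trans X act (trunc d X act) (trunc_act d X act) (proj d X act)"
  unfolding nat_trans_def trunc_def using trunc_act_proj[OF P] F by auto

lemma presheaf_trunc: "presheaf (trunc d X act) (trunc_act d X act)"
  unfolding presheaf_def
proof (intro conjI allI impI)
  fix n m and A :: "'f mat" and c assume as: "A \<in> carrier_mat n m \<and> c \<in> trunc d X act n"
  then obtain x where x: "x \<in> X n" "c = proj d X act n x" unfolding trunc_def by blast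
  have "act A x \<in> X m" using presheaf_act_closed[OF P] as x by blast
  then show "trunc_act d X act A c \<in> trunc d X act m"
    unfolding x(2) trunc_act_proj[OF P F[rule_format] conjunct1[OF as] x(1)] trunc_def by blast
next
  fix n c assume "c \<in> trunc d X act n"
  then obtain x where x: "x \<in> X n" "c = proj d X act n x" unfolding trunc_def by blast
  have "act (1\<^sub>m n) x = x" using presheaf_act_one[OF P x(1)] .
  then show "trunc_act d X act (1\<^sub>m n) c = c"
    unfolding x(2) using trunc_act_proj[OF P F[rule_format] one_carrier_mat x(1)] by simp
next
  fix n m k and A B :: "'f mat" and c
  assume as: "A \<in> carrier_mat n m \<and> B \<in> carrier_mat m k \<and> c \<in> trunc d X act n"
  then obtain x where x: "x \<in> X n" "c = proj d X act n x" unfolding trunc_def by blast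
  have A: "A \<in> carrier_mat n m" and B: "B \<in> carrier_mat m k" and AB: "A * B \<in> carrier_mat n k"
    using as by auto
  have "act (A * B) x = act B (act A x)" and ax: "act A x \<in> X m"
    using presheaf_act_mult[OF P A B x(1)] presheaf_act_closed[OF P A x(1)] by blast+
  then show "trunc_act d X act (A * B) c = trunc_act d X act B (trunc_act d X act A c)"
    unfolding x(2) trunc_act_proj[OF P F[rule_format] AB x(1)]
      trunc_act_proj[OF P F[rule_format] A x(1)] trunc_act_proj[OF P F[rule_format] B ax] by simp
qed

end

subsection \<open>Pushing coefficients forward along a natural transformation\<close>

definition lin_push :: "(nat \<Rightarrow> 'x set) \<Rightarrow> (nat \<Rightarrow> 'x \<Rightarrow> 'y) \<Rightarrow> nat \<Rightarrow> ('x \<Rightarrow> 'f::field) \<Rightarrow> ('y \<Rightarrow> 'f)" where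
  "lin_push X f v \<phi> = (\<lambda>y. \<Sum>x\<in>{x\<in>X v. f v x = y}. \<phi> x)"

lemma lin_push_in_lin: "nat_trans X act Y actY f \<Longrightarrow> lin_push X f v \<phi> \<in> lin Y v"
  unfolding lin_push_def lin_def nat_trans_def by (auto intro!: sum.neutral)

lemma lin_push_zero: "lin_push X f v (\<lambda>z. 0) = (\<lambda>y. 0)"
  unfolding lin_push_def by simp

lemma lin_push_add: "lin_push X f v (\<lambda>z. a z + b z) = (\<lambda>y. lin_push X f v a y + lin_push X f v b y)"
  unfolding lin_push_def by (simp add: sum.distrib)

lemma lin_push_diff: "lin_push X f v (\<lambda>z. a z - b z) = (\<lambda>y. lin_push X f v a y - lin_push X f v b y)"
  unfolding lin_push_def by (simp add: sum_subtractf)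

lemma lin_push_scale: "lin_push X f v (\<lambda>z. c * a z) = (\<lambda>y. c * lin_push X f v a y)"
  unfolding lin_push_def by (simp add: sum_distrib_left)

lemma lin_push_sum:
  "lin_push X f v (\<lambda>z. \<Sum>i\<in>I. c i * a i z) = (\<lambda>y. \<Sum>i\<in>I. c i * lin_push X f v (a i) y)"
  unfolding lin_push_def by (simp add: sum_distrib_left sum.swap[of _ I])

lemma lin_push_unit_lin: "finite (X v) \<Longrightarrow> x \<in> X v \<Longrightarrow> lin_push X f v (unit_lin x) = unit_lin (f v x)"
  unfolding lin_push_def unit_lin_def by (auto simp: sum.delta eq_commute[of _ x])

lemma sum_fibres_filter:
  assumes "finite S" "finite T" "g ` S \<subseteq> T"
  shows "(\<Sum>t\<in>{t\<in>T. P t}. \<Sum>x\<in>{x\<in>S. g x = t}. h x) = (\<Sum>x\<in>{x\<in>S. P (g x)}. h x)"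
proof -
  have "(\<Sum>t\<in>{t\<in>T. P t}. \<Sum>x\<in>{x\<in>S. g x = t}. h x)
      = (\<Sum>t\<in>{t\<in>T. P t}. \<Sum>x\<in>{x. x \<in> {x\<in>S. P (g x)} \<and> g x = t}. h x)"
    by (rule sum.cong) (auto intro!: sum.cong)
  also have "\<dots> = (\<Sum>x\<in>{x\<in>S. P (g x)}. h x)"
    by (rule sum.group) (use assms in auto)
  finally show ?thesis .
qed

context
  fixes X :: "nat \<Rightarrow> 'x set" and act :: "'f::field mat \<Rightarrow> 'x \<Rightarrow> 'x"
    and Y :: "nat \<Rightarrow> 'y set" and actY :: "'f mat \<Rightarrow> 'y \<Rightarrow> 'y" and f :: "nat \<Rightarrow> 'x \<Rightarrow> 'y"
  assumes PX: "presheaf X act" and PY: "presheaf Y actY"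
    and FX: "\<forall>v. finite (X v)" and FY: "\<forall>v. finite (Y v)"
    and f: "nat_trans X act Y actY f"
begin

lemma lin_push_lin_map:
  assumes A: "A \<in> carrier_mat n m"
  shows "lin_push X f m (lin_map X act A \<phi>) = lin_map Y actY A (lin_push X f n \<phi>)"
proof
  fix y
  have dr: "dim_row A = n" using A by auto
  have "lin_push X f m (lin_map X act A \<phi>) y
      = (\<Sum>t\<in>{t\<in>X m. f m t = y}. \<Sum>x\<in>{x\<in>X n. act A x = t}. \<phi> x)"
    unfolding lin_push_def lin_map_def dr ..
  also have "\<dots> = (\<Sum>x\<in>{x\<in>X n. f m (act A x) = y}. \<phi> x)"
    by (rule sum_fibres_filter) (use FX PX A in \<open>auto simp: presheaf_def\<close>)
  also have "\<dots> = (\<Sum>x\<in>{x\<in>X n. actY A (f n x) = y}. \<phi> x)"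
    using f A unfolding nat_trans_def by (intro sum.cong) auto
  also have "\<dots> = (\<Sum>t\<in>{t\<in>Y n. actY A t = y}. \<Sum>x\<in>{x\<in>X n. f n x = t}. \<phi> x)"
    by (rule sum_fibres_filter[symmetric]) (use FX FY f in \<open>auto simp: nat_trans_def\<close>)
  also have "\<dots> = lin_map Y actY A (lin_push X f n \<phi>) y"
    unfolding lin_push_def lin_map_def dr ..
  finally show "lin_push X f m (lin_map X act A \<phi>) y = lin_map Y actY A (lin_push X f n \<phi>) y" .
qed

lemma lin_push_deviation:
  "lin_push X f v (deviation X act d w v fs \<phi>) = deviation Y actY d w v fs (lin_push X f w \<phi>)"
  unfolding deviation_def lin_push_sum lin_push_lin_map[OF msum_carrier_mat] ..

lemma lin_push_qker:
  assumes \<phi>: "\<phi> \<in> qker d X act v"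
  shows "lin_push X f v \<phi> \<in> qker d Y actY v"
proof -
  define K where "K n = {\<phi> \<in> lin X n. lin_push X f n \<phi> \<in> qker d Y actY n}" for n
  note QY = lin_subfunctor_qker[OF PY, of d]
  note LX = lin_subfunctor_lin[OF PX]
  have "lin_subfunctor X act K"
  proof (rule lin_subfunctorI)
    fix n m and A :: "'f mat" and a assume A: "A \<in> carrier_mat n m" and "a \<in> K n"
    then have "lin_map Y actY A (lin_push X f n a) \<in> qker d Y actY m"
      unfolding K_def using lin_subfunctor_lin_map[OF QY A] by blast
    then show "lin_map X act A a \<in> K m"
      unfolding K_def using lin_map_in_lin[OF PX A] by (simp add: lin_push_lin_map[OF A])
  next
    show "(\<lambda>_. 0) \<in> K n" for n
      unfolding K_def using lin_subfunctor_zero[OF QY] lin_subfunctor_zero[OF LX] by (simp add: lin_push_zero)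
    show "(\<lambda>z. a z + b z) \<in> K n" if "a \<in> K n" "b \<in> K n" for n a b
      using that lin_subfunctor_add[OF QY] lin_subfunctor_add[OF LX] unfolding K_def by (simp add: lin_push_add)
    show "(\<lambda>z. c * a z) \<in> K n" if "a \<in> K n" for n c a
      using that lin_subfunctor_scale[OF QY] lin_subfunctor_scale[OF LX] unfolding K_def by (simp add: lin_push_scale)
  qed (simp add: K_def)
  moreover have "quot_deg_le X act d K"
    unfolding quot_deg_le_def
  proof (intro allI impI)
    fix w v and fs :: "nat \<Rightarrow> 'f mat" and \<psi> :: "'x \<Rightarrow> 'f"
    assume "(\<forall>k\<in>{0..d}. fs k \<in> carrier_mat w v) \<and> \<psi> \<in> lin X w"
    then have "deviation Y actY d w v fs (lin_push X f w \<psi>) \<in> qker d Y actY v"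
      using quot_deg_le_qker[of Y actY d] lin_push_in_lin[OF f] unfolding quot_deg_le_def by blast
    then show "deviation X act d w v fs \<psi> \<in> K v"
      unfolding K_def using deviation_in_lin[OF PX] by (simp add: lin_push_deviation)
  qed
  ultimately show ?thesis using qker_minimal \<phi> unfolding K_def by blast
qed

context
  assumes surj: "\<forall>v. \<forall>y\<in>Y v. \<exists>x\<in>X v. f v x = y"
begin

lemma lin_push_surj:
  assumes \<psi>: "\<psi> \<in> lin Y w"
  shows "\<exists>\<phi>\<in>lin X w. lin_push X f w \<phi> = \<psi>"
proof -
  define r where "r y = (SOME x. x \<in> X w \<and> f w x = y)" for y
  have r: "r y \<in> X w" "f w (r y) = y" if "y \<in> Y w" for y
    using someI_ex[of "\<lambda>x. x \<in> X w \<and> f w x = y"] surj that unfolding r_def by blast+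
  define \<phi> where "\<phi> x = (if x \<in> X w \<and> r (f w x) = x then \<psi> (f w x) else 0)" for x
  have "lin_push X f w \<phi> y = \<psi> y" for y
  proof (cases "y \<in> Y w")
    case True
    have "lin_push X f w \<phi> y = (\<Sum>x\<in>{x\<in>X w. f w x = y}. if r y = x then \<psi> y else 0)"
      unfolding lin_push_def \<phi>_def by (rule sum.cong) auto
    also have "\<dots> = \<psi> y" using FX r[OF True] by (simp add: sum.delta)
    finally show ?thesis .
  next
    case False
    then have "{x\<in>X w. f w x = y} = {}" using f unfolding nat_trans_def by auto
    moreover have "\<psi> y = 0" using \<psi> False unfolding lin_def by auto
    ultimately show ?thesis unfolding lin_push_def by (simp only: sum.empty)
  qed
  moreover have "\<phi> \<in> lin X w" unfolding lin_def \<phi>_def by auto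
  ultimately show ?thesis by blast
qed

lemma qker_subset_lin_push_image:
  "qker d Y actY v \<subseteq> lin_push X f v ` qker d X act v"
proof -
  define K where "K n = lin_push X f n ` qker d X act n" for n
  note QX = lin_subfunctor_qker[OF PX, of d]
  have "lin_subfunctor Y actY K"
  proof (rule lin_subfunctorI)
    show "K n \<subseteq> lin Y n" for n unfolding K_def using lin_push_in_lin[OF f] by blast
    have "lin_push X f n (\<lambda>_. 0) \<in> K n" for n
      unfolding K_def using lin_subfunctor_zero[OF QX] by (rule imageI)
    then show "(\<lambda>_. 0) \<in> K n" for n by (simp add: lin_push_zero)
  next
    fix n a b assume "a \<in> K n" "b \<in> K n"
    then obtain p q where "p \<in> qker d X act n" "q \<in> qker d X act n" "a = lin_push X f n p" "b = lin_push X f n q"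
      unfolding K_def by blast
    then show "(\<lambda>z. a z + b z) \<in> K n"
      unfolding K_def using lin_subfunctor_add[OF QX] by (simp add: lin_push_add[symmetric] imageI)
  next
    fix n c a assume "a \<in> K n"
    then obtain p where "p \<in> qker d X act n" "a = lin_push X f n p" unfolding K_def by blast
    then show "(\<lambda>z. c * a z) \<in> K n"
      unfolding K_def using lin_subfunctor_scale[OF QX] by (simp add: lin_push_scale[symmetric] imageI)
  next
    fix n m and A :: "'f mat" and a assume A: "A \<in> carrier_mat n m" and "a \<in> K n"
    then obtain p where "p \<in> qker d X act n" "a = lin_push X f n p" unfolding K_def by blast
    then show "lin_map Y actY A a \<in> K m"
      unfolding K_def using lin_subfunctor_lin_map[OF QX A] by (simp add: lin_push_lin_map[OF A, symmetric] imageI)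
  qed
  moreover have "quot_deg_le Y actY d K"
    unfolding quot_deg_le_def
  proof (intro allI impI)
    fix w v and fs :: "nat \<Rightarrow> 'f mat" and \<psi> :: "'y \<Rightarrow> 'f"
    assume as: "(\<forall>k\<in>{0..d}. fs k \<in> carrier_mat w v) \<and> \<psi> \<in> lin Y w"
    then obtain \<phi> where \<phi>: "\<phi> \<in> lin X w" "lin_push X f w \<phi> = \<psi>" using lin_push_surj by blast
    have "deviation X act d w v fs \<phi> \<in> qker d X act v"
      using quot_deg_le_qker[of X act d] \<phi> as unfolding quot_deg_le_def by blast
    then have "lin_push X f v (deviation X act d w v fs \<phi>) \<in> K v"
      unfolding K_def by (rule imageI)
    then show "deviation Y actY d w v fs \<psi> \<in> K v"
      by (simp add: lin_push_deviation \<phi>(2))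
  qed
  ultimately show ?thesis using qker_minimal unfolding K_def by blast
qed

end

end

subsection \<open>Degree at most d implies degree at most d+1\<close>

definition cross_term ::
  "(nat \<Rightarrow> 'x set) \<Rightarrow> ('f::field mat \<Rightarrow> 'x \<Rightarrow> 'x) \<Rightarrow> nat \<Rightarrow> nat \<Rightarrow> (nat \<Rightarrow> 'f mat)
     \<Rightarrow> ('x \<Rightarrow> 'f) \<Rightarrow> 'x \<Rightarrow> nat set \<Rightarrow> 'f" where
  "cross_term X act w v fs \<phi> z I = (-1) ^ card I * lin_map X act (msum w v fs I) \<phi> z"

lemma deviation_eq_sum_cross_term:
  "deviation X act d w v fs \<phi> z = (\<Sum>I\<in>Pow {0..d}. cross_term X act w v fs \<phi> z I)"
  unfolding deviation_def cross_term_def ..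

lemma sum_Pow_insert:
  assumes "finite S" "a \<notin> S"
  shows "sum g (Pow (insert a S)) = sum g (Pow S) + (\<Sum>I\<in>Pow S. g (insert a I))"
proof -
  have inj: "inj_on (insert a) (Pow S)"
    using assms(2) unfolding inj_on_def by (metis PowD insert_ident subsetD)
  have "sum g (Pow (insert a S)) = sum g (Pow S \<union> insert a ` Pow S)" by (simp add: Pow_insert)
  also have "\<dots> = sum g (Pow S) + sum g (insert a ` Pow S)"
    by (rule sum.union_disjoint) (use assms in auto)
  also have "sum g (insert a ` Pow S) = (\<Sum>I\<in>Pow S. g (insert a I))"
    using sum.reindex[OF inj] by simp
  finally show ?thesis .
qed

lemma cross_term_upd_other:
  assumes "a \<notin> I"
  shows "cross_term X act w v (fs(a := M)) \<phi> z I = cross_term X act w v fs \<phi> z I"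
proof -
  have "(\<Sum>k\<in>I. (fs(a := M)) k $$ p) = (\<Sum>k\<in>I. fs k $$ p)" for p
    using assms by (intro sum.cong) auto
  then show ?thesis unfolding cross_term_def msum_def by simp
qed

lemma cross_term_replace:
  assumes "finite I" "a \<notin> I" "b \<notin> I"
  shows "cross_term X act w v (fs(a := fs b)) \<phi> z (insert a I) = cross_term X act w v fs \<phi> z (insert b I)"
proof -
  have "(\<Sum>k\<in>I. (fs(a := M)) k $$ p) = (\<Sum>k\<in>I. fs k $$ p)" for M p
    using assms(2) by (intro sum.cong) auto
  then have "msum w v (fs(a := fs b)) (insert a I) = msum w v fs (insert b I)"
    unfolding msum_def using assms by simp
  then show ?thesis unfolding cross_term_def using assms by simp
qed

lemma cross_term_merge:
  assumes "finite I" "a \<notin> I" "b \<notin> I" "a \<noteq> b"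
    and "fs a \<in> carrier_mat w v" "fs b \<in> carrier_mat w v"
  shows "cross_term X act w v (fs(a := fs a + fs b)) \<phi> z (insert a I)
       = - cross_term X act w v fs \<phi> z (insert b (insert a I))"
proof -
  have "(\<Sum>k\<in>I. (fs(a := M)) k $$ p) = (\<Sum>k\<in>I. fs k $$ p)" for M p
    using assms(2) by (intro sum.cong) auto
  then have "msum w v (fs(a := fs a + fs b)) (insert a I) = msum w v fs (insert b (insert a I))"
    using assms by (intro eq_matI) (auto simp: msum_def)
  then show ?thesis unfolding cross_term_def using assms by simp
qed

text \<open>The (d+2)-nd deviation measures the failure of the (d+1)-st one to be additive in its last
  argument.\<close>

lemma deviation_Suc:
  assumes "fs d \<in> carrier_mat w v" "fs (Suc d) \<in> carrier_mat w v"
  shows "deviation X act (Suc d) w v fs \<phi> = (\<lambda>z. deviation X act d w v fs \<phi> z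
      + deviation X act d w v (fs(d := fs (Suc d))) \<phi> z - deviation X act d w v (fs(d := fs d + fs (Suc d))) \<phi> z)"
proof
  fix z
  let ?S = "{0..<d}" and ?t = "\<lambda>gs. cross_term X act w v gs \<phi> z"
  let ?A0 = "\<Sum>I\<in>Pow ?S. ?t fs I" and ?A1 = "\<Sum>I\<in>Pow ?S. ?t fs (insert d I)"
    and ?B1 = "\<Sum>I\<in>Pow ?S. ?t fs (insert (Suc d) I)"
    and ?B2 = "\<Sum>I\<in>Pow ?S. ?t fs (insert (Suc d) (insert d I))"
  have S: "finite ?S" "d \<notin> ?S" "finite (insert d ?S)" "Suc d \<notin> insert d ?S" by auto
  have ivl: "{0..Suc d} = insert (Suc d) (insert d ?S)" "{0..d} = insert d ?S" by auto
  have fin: "finite I" "d \<notin> I" "Suc d \<notin> I" if "I \<in> Pow ?S" for I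
    using that finite_subset by auto
  have upd: "(\<Sum>I\<in>Pow ?S. ?t (fs(d := M)) I) = ?A0" for M
    by (intro sum.cong) (auto intro: cross_term_upd_other)
  have "deviation X act (Suc d) w v fs \<phi> z = (?A0 + ?A1) + (?B1 + ?B2)"
    unfolding deviation_eq_sum_cross_term ivl sum_Pow_insert[OF S(3,4)] sum_Pow_insert[OF S(1,2)] ..
  moreover have "deviation X act d w v fs \<phi> z = ?A0 + ?A1"
    unfolding deviation_eq_sum_cross_term ivl sum_Pow_insert[OF S(1,2)] ..
  moreover have "deviation X act d w v (fs(d := fs (Suc d))) \<phi> z = ?A0 + ?B1"
  proof -
    have "?t (fs(d := fs (Suc d))) (insert d I) = ?t fs (insert (Suc d) I)" if "I \<in> Pow ?S" for I
      using fin[OF that] by (rule cross_term_replace)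
    then show ?thesis
      unfolding deviation_eq_sum_cross_term ivl sum_Pow_insert[OF S(1,2)] upd by simp
  qed
  moreover have "deviation X act d w v (fs(d := fs d + fs (Suc d))) \<phi> z = ?A0 - ?B2"
  proof -
    have "?t (fs(d := fs d + fs (Suc d))) (insert d I) = - ?t fs (insert (Suc d) (insert d I))"
      if "I \<in> Pow ?S" for I
      using fin[OF that] by (rule cross_term_merge) (use assms in auto)
    then show ?thesis
      unfolding deviation_eq_sum_cross_term ivl sum_Pow_insert[OF S(1,2)] upd by (simp add: sum_negf)
  qed
  ultimately show "deviation X act (Suc d) w v fs \<phi> z = deviation X act d w v fs \<phi> z
      + deviation X act d w v (fs(d := fs (Suc d))) \<phi> z - deviation X act d w v (fs(d := fs d + fs (Suc d))) \<phi> z"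
    by simp
qed

lemma quot_deg_le_Suc:
  fixes act :: "'f::field mat \<Rightarrow> 'x \<Rightarrow> 'x"
  assumes K: "lin_subfunctor X act K" and Q: "quot_deg_le X act d K"
  shows "quot_deg_le X act (Suc d) K"
  unfolding quot_deg_le_def
proof (intro allI impI)
  fix w v and fs :: "nat \<Rightarrow> 'f mat" and \<phi> :: "'x \<Rightarrow> 'f"
  assume as: "(\<forall>k\<in>{0..Suc d}. fs k \<in> carrier_mat w v) \<and> \<phi> \<in> lin X w"
  have dev: "deviation X act d w v gs \<phi> \<in> K v" if "\<forall>k\<in>{0..d}. gs k \<in> carrier_mat w v" for gs
    using Q as that unfolding quot_deg_le_def by blast
  have C: "fs d \<in> carrier_mat w v" "fs (Suc d) \<in> carrier_mat w v" using as by auto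
  show "deviation X act (Suc d) w v fs \<phi> \<in> K v"
    unfolding deviation_Suc[OF C]
    by (intro lin_subfunctor_diff[OF K] lin_subfunctor_add[OF K] dev) (use as in auto)
qed

lemma qker_Suc_subset:
  assumes "presheaf X act"
  shows "qker (Suc d) X act v \<subseteq> qker d X act v"
proof (rule qker_minimal)
  show "lin_subfunctor X act (qker d X act)" by (rule lin_subfunctor_qker[OF assms])
  then show "quot_deg_le X act (Suc d) (qker d X act)" by (rule quot_deg_le_Suc[OF _ quot_deg_le_qker])
qed

lemma finite_deg_le_Suc: "finite_deg_le d Y actY \<Longrightarrow> finite_deg_le (Suc d) Y actY"
  unfolding finite_deg_le_def using qker_Suc_subset by blast

subsection \<open>The universal property\<close>

text \<open>The conclusion reads \<open>\<phi> \<equiv> s (f\<^sub>* \<phi>)\<close> modulo K, where s is the linear extension of r.\<close>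

lemma diff_section_lin_push:
  fixes \<phi> :: "'x \<Rightarrow> 'f::field"
  assumes K: "lin_subfunctor X act K" and fin: "finite (X v)" "finite T" and fX: "f v ` X v \<subseteq> T"
    and r: "\<forall>x\<in>X v. (\<lambda>z. unit_lin x z - unit_lin (r (f v x)) z) \<in> K v" and \<phi>: "\<phi> \<in> lin X v"
  shows "(\<lambda>z. \<phi> z - (\<Sum>c\<in>T. lin_push X f v \<phi> c * unit_lin (r c) z)) \<in> K v"
proof -
  have push: "(\<Sum>c\<in>T. lin_push X f v \<phi> c * unit_lin (r c) z) = (\<Sum>x\<in>X v. \<phi> x * unit_lin (r (f v x)) z)" for z
  proof -
    have "(\<Sum>x\<in>X v. \<phi> x * unit_lin (r (f v x)) z)
        = (\<Sum>c\<in>T. \<Sum>x\<in>{x\<in>X v. f v x = c}. \<phi> x * unit_lin (r (f v x)) z)"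
      by (rule sum.group[symmetric]) (use fin fX in auto)
    then show ?thesis unfolding lin_push_def sum_distrib_right by (auto intro!: sum.cong)
  qed
  have "\<phi> z - (\<Sum>c\<in>T. lin_push X f v \<phi> c * unit_lin (r c) z)
      = (\<Sum>x\<in>X v. \<phi> x * (unit_lin x z - unit_lin (r (f v x)) z))" for z
    unfolding push by (subst lin_eq_sum_unit_lin[OF fin(1) \<phi>]) (simp add: right_diff_distrib sum_subtractf)
  then show ?thesis using lin_subfunctor_sum[OF K fin(1) r] by simp
qed

lemma finite_deg_le_trunc:
  fixes act :: "'f::field mat \<Rightarrow> 'x \<Rightarrow> 'x"
  assumes P: "presheaf X act" and F: "\<forall>v. finite (X v)"
  shows "finite_deg_le d (trunc d X act) (trunc_act d X act)"
  unfolding finite_deg_le_def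
proof (intro conjI allI impI)
  let ?Y = "trunc d X act" and ?p = "proj d X act"
  have FY: "\<forall>v. finite (?Y v)" using F unfolding trunc_def by auto
  then show "finite (?Y v)" for v by blast
  show PY: "presheaf ?Y (trunc_act d X act)" by (rule presheaf_trunc[OF P F])
  fix v c c'
  assume as: "c \<in> ?Y v \<and> c' \<in> ?Y v \<and>
      (\<lambda>z. (unit_lin c :: _ \<Rightarrow> 'f) z - unit_lin c' z) \<in> qker d ?Y (trunc_act d X act) v"
  have surj: "\<forall>v. \<forall>y\<in>?Y v. \<exists>x\<in>X v. ?p v x = y" unfolding trunc_def by blast
  have "(\<lambda>z. unit_lin c z - unit_lin c' z) \<in> lin_push X ?p v ` qker d X act v"
    using subsetD[OF qker_subset_lin_push_image[OF P PY F FY nat_trans_proj[OF P F] surj]] as by blast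
  then obtain \<phi> where "(\<lambda>z. unit_lin c z - unit_lin c' z) = lin_push X ?p v \<phi>" "\<phi> \<in> qker d X act v"
    by (rule imageE)
  then have \<phi>: "\<phi> \<in> qker d X act v" "lin_push X ?p v \<phi> = (\<lambda>z. unit_lin c z - unit_lin c' z)"
    by simp_all
  define r where "r c = (SOME x. x \<in> X v \<and> ?p v x = c)" for c
  have r: "r c \<in> X v" "?p v (r c) = c" if "c \<in> ?Y v" for c
    using someI_ex[of "\<lambda>x. x \<in> X v \<and> ?p v x = c"] surj that unfolding r_def by blast+
  have px: "?p v ` X v \<subseteq> ?Y v" unfolding trunc_def by blast
  have fibre_rel: "\<forall>x\<in>X v. (\<lambda>z. unit_lin x z - unit_lin (r (?p v x)) z) \<in> qker d X act v"
  proof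
    fix x assume "x \<in> X v"
    then have "?p v x \<in> ?Y v" using px by blast
    then have "?p v x = ?p v (r (?p v x))" using r(2) by simp
    then show "(\<lambda>z. unit_lin x z - unit_lin (r (?p v x)) z) \<in> qker d X act v"
      by (simp only: proj_eq_iff[OF P])
  qed
  note Q = lin_subfunctor_qker[OF P, of d]
  have "(\<lambda>z. \<phi> z - (\<Sum>b\<in>?Y v. lin_push X ?p v \<phi> b * unit_lin (r b) z)) \<in> qker d X act v"
    using diff_section_lin_push[where X = X and v = v and f = ?p, OF Q F[rule_format] FY[rule_format] px fibre_rel]
      lin_subfunctor_subset_lin[OF Q \<phi>(1)] .
  from lin_subfunctor_diff[OF Q \<phi>(1) this]
  have "(\<lambda>z. \<Sum>b\<in>?Y v. lin_push X ?p v \<phi> b * unit_lin (r b) z) \<in> qker d X act v" by simp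
  moreover have "(\<Sum>b\<in>?Y v. lin_push X ?p v \<phi> b * unit_lin (r b) z) = unit_lin (r c) z - unit_lin (r c') z" for z
    using as unfolding \<phi>(2) left_diff_distrib sum_subtractf
    by (simp add: sum_unit_lin_mult[OF FY[rule_format]])
  ultimately have "(\<lambda>z. unit_lin (r c) z - unit_lin (r c') z) \<in> qker d X act v" by simp
  then have "?p v (r c) = ?p v (r c')" by (simp only: proj_eq_iff[OF P])
  then show "c = c'" using r(2) as by simp
qed

lemma trunc_universal:
  fixes act :: "'f::field mat \<Rightarrow> 'x \<Rightarrow> 'x" and actY :: "'f mat \<Rightarrow> 'y \<Rightarrow> 'y"
  assumes P: "presheaf X act" and F: "\<forall>v. finite (X v)"
    and Y: "finite_deg_le d Y actY" and g: "nat_trans X act Y actY g"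
  shows "\<exists>h. nat_trans (trunc d X act) (trunc_act d X act) Y actY h
             \<and> (\<forall>v x. x \<in> X v \<longrightarrow> h v (proj d X act v x) = g v x)"
proof -
  have PY: "presheaf Y actY" and FY: "\<forall>v. finite (Y v)"
    and mono: "\<And>v y y'. y \<in> Y v \<Longrightarrow> y' \<in> Y v \<Longrightarrow>
        (\<lambda>z. (unit_lin y :: 'y \<Rightarrow> 'f) z - unit_lin y' z) \<in> qker d Y actY v \<Longrightarrow> y = y'"
    using Y unfolding finite_deg_le_def by blast+
  have gY: "g v x \<in> Y v" if "x \<in> X v" for v x using nat_trans_closed[OF g that] .
  have well_defined: "g v x = g v x'"
    if "x \<in> X v" "x' \<in> X v" "proj d X act v x = proj d X act v x'" for v x x'
  proof -
    have "(\<lambda>z. (unit_lin x :: 'x \<Rightarrow> 'f) z - unit_lin x' z) \<in> qker d X act v"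
      using proj_eq_iff[OF P] that(3) by blast
    from lin_push_qker[OF P PY F FY g this]
    have "(\<lambda>z. (unit_lin (g v x) :: 'y \<Rightarrow> 'f) z - unit_lin (g v x') z) \<in> qker d Y actY v"
      unfolding lin_push_diff lin_push_unit_lin[where X = X and v = v, OF F[rule_format] that(1)]
        lin_push_unit_lin[where X = X and v = v, OF F[rule_format] that(2)] .
    then show ?thesis using mono gY that by blast
  qed
  define h where "h v c = g v (SOME x. x \<in> X v \<and> proj d X act v x = c)" for v c
  have h_proj: "h v (proj d X act v x) = g v x" if "x \<in> X v" for v x
  proof -
    have "\<exists>x'. x' \<in> X v \<and> proj d X act v x' = proj d X act v x" using that by blast
    from someI_ex[OF this] show ?thesis unfolding h_def using well_defined that by blast
  qed
  have "nat_trans (trunc d X act) (trunc_act d X act) Y actY h"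
    unfolding nat_trans_def
  proof (intro conjI allI impI)
    fix n c assume "c \<in> trunc d X act n"
    then obtain x where "x \<in> X n" "c = proj d X act n x" unfolding trunc_def by blast
    then show "h n c \<in> Y n" using h_proj gY by simp
  next
    fix n m and A :: "'f mat" and c assume as: "A \<in> carrier_mat n m \<and> c \<in> trunc d X act n"
    then obtain x where x: "x \<in> X n" "c = proj d X act n x" unfolding trunc_def by blast
    have A: "A \<in> carrier_mat n m" using as by blast
    have ax: "act A x \<in> X m" using presheaf_act_closed[OF P A x(1)] .
    show "h m (trunc_act d X act A c) = actY A (h n c)"
      unfolding x(2) trunc_act_proj[OF P F[rule_format] A x(1)] h_proj[OF ax] h_proj[OF x(1)]
      by (rule nat_trans_act[OF g A x(1)])
  qed
  with h_proj show ?thesis by (intro exI[of _ h]) blast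
qed

theorem proposition3p11:
  fixes X :: "nat \<Rightarrow> 'x set" and act :: "'f::{finite,field} mat \<Rightarrow> 'x \<Rightarrow> 'x"
  assumes "prime (card (UNIV :: 'f set))"
    and "presheaf X act"
    and "\<forall>v. finite (X v)"
  shows "\<forall>d. finite_deg_le d (trunc d X act) (trunc_act d X act)
           \<and> nat_trans X act (trunc d X act) (trunc_act d X act) (proj d X act)
           \<and> (\<forall>(Y :: nat \<Rightarrow> 'y set) actY g.
                 finite_deg_le d Y actY \<and> nat_trans X act Y actY g \<longrightarrow>
                 (\<exists>h. nat_trans (trunc d X act) (trunc_act d X act) Y actY h
                      \<and> (\<forall>v x. x \<in> X v \<longrightarrow> h v (proj d X act v x) = g v x))
                 \<and> (\<forall>h h'. nat_trans (trunc d X act) (trunc_act d X act) Y actY h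
                      \<and> (\<forall>v x. x \<in> X v \<longrightarrow> h v (proj d X act v x) = g v x)
                      \<and> nat_trans (trunc d X act) (trunc_act d X act) Y actY h'
                      \<and> (\<forall>v x. x \<in> X v \<longrightarrow> h' v (proj d X act v x) = g v x)
                      \<longrightarrow> (\<forall>v c. c \<in> trunc d X act v \<longrightarrow> h v c = h' v c)))
           \<and> (\<exists>t. nat_trans (trunc (Suc d) X act) (trunc_act (Suc d) X act)
                             (trunc d X act) (trunc_act d X act) t
                  \<and> (\<forall>v x. x \<in> X v \<longrightarrow> t v (proj (Suc d) X act v x) = proj d X act v x))"
proof (intro allI conjI impI)
  fix d
  note P = assms(2) and F = assms(3)
  show "finite_deg_le d (trunc d X act) (trunc_act d X act)" by (rule finite_deg_le_trunc[OF P F])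
  show "nat_trans X act (trunc d X act) (trunc_act d X act) (proj d X act)" by (rule nat_trans_proj[OF P F])
  show "\<exists>t. nat_trans (trunc (Suc d) X act) (trunc_act (Suc d) X act) (trunc d X act) (trunc_act d X act) t
      \<and> (\<forall>v x. x \<in> X v \<longrightarrow> t v (proj (Suc d) X act v x) = proj d X act v x)"
    by (rule trunc_universal[OF P F finite_deg_le_Suc[OF finite_deg_le_trunc[OF P F]] nat_trans_proj[OF P F]])
  fix Y :: "nat \<Rightarrow> 'y set" and actY g
  assume "finite_deg_le d Y actY \<and> nat_trans X act Y actY g"
  then show "\<exists>h. nat_trans (trunc d X act) (trunc_act d X act) Y actY h
      \<and> (\<forall>v x. x \<in> X v \<longrightarrow> h v (proj d X act v x) = g v x)"
    using trunc_universal[OF P F] by blast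
next
  fix d Y actY g h h' v c
  assume as: "nat_trans (trunc d X act) (trunc_act d X act) Y actY h
      \<and> (\<forall>v x. x \<in> X v \<longrightarrow> h v (proj d X act v x) = g v x)
      \<and> nat_trans (trunc d X act) (trunc_act d X act) Y actY h'
      \<and> (\<forall>v x. x \<in> X v \<longrightarrow> h' v (proj d X act v x) = g v x)"
    and "c \<in> trunc d X act v"
  then obtain x where "x \<in> X v" "c = proj d X act v x" unfolding trunc_def by blast
  then show "h v c = h' v c" using as by simp
qed

end
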